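(* Let $D=pq$ with $p\neq q$ odd primes, let $r$ be a positive integer with $2rD$ square-free, and let $d$ be a (possibly negative) integer with $d\mid rD$. Let $C_d$ be the curve $W^2=d+\frac{8rD}{d}Z^4$. Then: (1) $C_d(\mathbb{Q}_2)\neq\emptyset$ if and only if $d\equiv1\pmod 8$; (2) for any prime $t\mid \frac{rD}{d}$, $C_d(\mathbb{Q}_t)\neq\emptyset$ if and only if $\left(\frac{d}{t}\right)=1$; (3) for any prime $l\mid d$, $C_d(\mathbb{Q}_l)\neq\emptyset$ if and only if $\left(\frac{2rD/d}{l}\right)=1$.
   Context: $\left(\frac{\cdot}{\cdot}\right)$ denotes the Legendre symbol; $C_d(\mathbb{Q}_v)$ denotes the set of $\mathbb{Q}_v$-points $(Z,W)$ of the affine curve. *)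

theory Defs
  imports Complex_Main "HOL-Number_Theory.Number_Theory" "HOL-Computational_Algebra.Squarefree"
begin

definition padic_val :: "int \<Rightarrow> rat \<Rightarrow> int" where
  "padic_val p x = int (multiplicity p (fst (quotient_of x)))
                   - int (multiplicity p (snd (quotient_of x)))"

definition padic_abs :: "int \<Rightarrow> rat \<Rightarrow> real" where
  "padic_abs p x = (if x = 0 then 0 else real_of_int p powr (- real_of_int (padic_val p x)))"

definition padic_cauchy :: "int \<Rightarrow> (nat \<Rightarrow> rat) \<Rightarrow> bool" where
  "padic_cauchy p X \<longleftrightarrow> (\<forall>e>0. \<exists>N. \<forall>m\<ge>N. \<forall>n\<ge>N. padic_abs p (X m - X n) < e)"

definition padic_tendsto_zero :: "int \<Rightarrow> (nat \<Rightarrow> rat) \<Rightarrow> bool" where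
  "padic_tendsto_zero p X \<longleftrightarrow> (\<forall>e>0. \<exists>N. \<forall>n\<ge>N. padic_abs p (X n) < e)"

text \<open>\<open>C(\<Q>_p) \<noteq> \<emptyset>\<close> for the affine curve \<open>W^2 = a + b Z^4\<close>.
  \<open>\<Q>_p\<close> is the completion of \<open>\<Q>\<close> w.r.t. the p-adic absolute value, so a
  \<open>\<Q>_p\<close>-point is a pair of p-adic Cauchy sequences of rationals (representing
  \<open>(Z,W)\<close>) along which \<open>W^2 - a - b Z^4\<close> tends p-adically to 0
  (the polynomial is continuous, so its value at the limit point is 0).\<close>
definition has_Qp_point :: "int \<Rightarrow> int \<Rightarrow> int \<Rightarrow> bool" where
  "has_Qp_point p a b \<longleftrightarrow>
     (\<exists>Z W. padic_cauchy p Z \<and> padic_cauchy p W \<and>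
        padic_tendsto_zero p (\<lambda>n. (W n)^2 - of_int a - of_int b * (Z n)^4))"

end

theory Submission
  imports Defs
begin

text \<open>
  If a point has \<open>p\<close>-integral \<open>Z\<close>,
  reducing \<open>W^2 = a + b Z^4\<close> modulo \<open>p^{v(b)}\<close> makes \<open>a\<close> a square there; if \<open>Z\<close> is not
  integral, \<open>v(W^2) = v(b) + 4 v(Z)\<close> is impossible for odd \<open>v(b) \<le> 3\<close>. At a prime dividing
  \<open>a\<close> exactly once, \<open>Z\<close> cannot be divisible by \<open>p\<close> (as then \<open>v(W^2) = 1\<close>), and dividing the
  equation by \<open>Z^4\<close> shows that \<open>b\<close> is a square modulo \<open>p\<close>. Conversely, Hensel lifting of
  a square root of \<open>a\<close> (resp. of \<open>a + b\<close>) produces integer sequences converging \<open>p\<close>-adically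
  to a point with \<open>Z = 0\<close> (resp. \<open>Z = 1\<close>); at \<open>p = 2\<close> this works for \<open>a \<equiv> 1 (mod 8)\<close>.
\<close>

section \<open>The \<open>p\<close>-adic valuation on \<open>\<rat>\<close>\<close>

lemma rat_fraction:
  fixes x :: rat
  obtains a b where "x = of_int a / of_int b" "b > 0" "coprime a b"
proof -
  obtain a b where q: "quotient_of x = (a, b)" by (cases "quotient_of x") auto
  show thesis
    using that quotient_of_div[OF q] quotient_of_denom_pos[OF q] quotient_of_coprime[OF q] by blast
qed

lemma padic_val_of_int: "padic_val p (of_int a) = int (multiplicity p a)"
  by (simp add: padic_val_def quotient_of_int)

lemma padic_val_fraction:
  assumes p: "prime p" and a: "a \<noteq> 0" and b: "b \<noteq> 0"
  shows "padic_val p (of_int a / of_int b) = int (multiplicity p a) - int (multiplicity p b)"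
proof -
  obtain a' b' where q: "quotient_of (of_int a / of_int b) = (a', b')"
    by (cases "quotient_of (of_int a / of_int b)") auto
  have b': "b' > 0" using quotient_of_denom_pos[OF q] .
  have "(of_int a / of_int b :: rat) = of_int a' / of_int b'" using quotient_of_div[OF q] .
  hence "(of_int (a * b') :: rat) = of_int (a' * b)" using b b' by (simp add: field_simps)
  hence eq: "a * b' = a' * b" by (simp only: of_int_eq_iff)
  have a': "a' \<noteq> 0" using eq a b' by auto
  have pe: "prime_elem p" using p by (rule prime_imp_prime_elem)
  have "multiplicity p a + multiplicity p b' = multiplicity p a' + multiplicity p b"
    using eq prime_elem_multiplicity_mult_distrib[OF pe] a b a' b' by (metis less_irrefl)
  thus ?thesis using q by (simp add: padic_val_def)
qed

lemma padic_val_one [simp]: "padic_val p 1 = 0"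
  using padic_val_of_int[of p 1] by simp

lemma padic_val_mult:
  assumes p: "prime p" and "x \<noteq> 0" "y \<noteq> 0"
  shows "padic_val p (x * y) = padic_val p x + padic_val p y"
proof -
  obtain a b where x: "x = of_int a / of_int b" "b > 0" using rat_fraction by blast
  obtain c e where y: "y = of_int c / of_int e" "e > 0" using rat_fraction by blast
  have nz: "a \<noteq> 0" "b \<noteq> 0" "c \<noteq> 0" "e \<noteq> 0" using x y assms by auto
  have pe: "prime_elem p" using p by (rule prime_imp_prime_elem)
  have "x * y = of_int (a * c) / of_int (b * e)" using x y by simp
  hence "padic_val p (x * y) = int (multiplicity p (a * c)) - int (multiplicity p (b * e))"
    using padic_val_fraction[OF p, of "a * c" "b * e"] nz by (simp only: mult_eq_0_iff) simp
  also have "\<dots> = (int (multiplicity p a) - int (multiplicity p b))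
                 + (int (multiplicity p c) - int (multiplicity p e))"
    using prime_elem_multiplicity_mult_distrib[OF pe] nz by simp
  also have "\<dots> = padic_val p x + padic_val p y"
    using padic_val_fraction[OF p] x y nz by simp
  finally show ?thesis .
qed

lemma padic_val_uminus: "padic_val p (- x) = padic_val p x"
proof -
  have "quotient_of (- x) = (- fst (quotient_of x), snd (quotient_of x))"
    by (simp add: rat_uminus_code Let_def split: prod.split)
  thus ?thesis by (simp add: padic_val_def)
qed

lemma padic_val_add:
  assumes p: "prime p" and nz: "x \<noteq> 0" "y \<noteq> 0" "x + y \<noteq> 0"
  shows "min (padic_val p x) (padic_val p y) \<le> padic_val p (x + y)"
proof -
  obtain a b where x: "x = of_int a / of_int b" "b > 0" using rat_fraction by blast
  obtain c e where y: "y = of_int c / of_int e" "e > 0" using rat_fraction by blast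
  have abce: "a \<noteq> 0" "b \<noteq> 0" "c \<noteq> 0" "e \<noteq> 0" using x y nz by auto
  have s: "x + y = of_int (a * e + c * b) / of_int (b * e)" using x y by (simp add: field_simps)
  have sn: "a * e + c * b \<noteq> 0" using s nz(3) by (metis div_0 of_int_0)
  have pe: "prime_elem p" using p by (rule prime_imp_prime_elem)
  define k where "k = min (multiplicity p (a * e)) (multiplicity p (c * b))"
  have "p ^ k dvd a * e" "p ^ k dvd c * b" unfolding k_def by (simp_all add: multiplicity_dvd')
  hence "p ^ k dvd a * e + c * b" by simp
  hence "k \<le> multiplicity p (a * e + c * b)"
    using multiplicity_geI sn p by (metis not_prime_unit)
  moreover have "padic_val p (x + y) = int (multiplicity p (a * e + c * b)) - int (multiplicity p (b * e))"
    unfolding s using padic_val_fraction[OF p sn, of "b * e"] abce by (simp only: mult_eq_0_iff) simp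
  moreover have "padic_val p x = int (multiplicity p a) - int (multiplicity p b)"
    "padic_val p y = int (multiplicity p c) - int (multiplicity p e)"
    using padic_val_fraction[OF p] x y abce by simp_all
  ultimately show ?thesis
    unfolding k_def using prime_elem_multiplicity_mult_distrib[OF pe] abce by simp
qed

lemma padic_val_power:
  assumes "prime p" "x \<noteq> 0"
  shows "padic_val p (x ^ n) = int n * padic_val p x"
  by (induction n) (use assms padic_val_mult in \<open>auto simp: algebra_simps\<close>)

lemma padic_val_inverse:
  assumes "prime p" "x \<noteq> 0"
  shows "padic_val p (inverse x) = - padic_val p x"
  using padic_val_mult[OF assms(1), of x "inverse x"] assms by simp

definition padic_val_ge :: "int \<Rightarrow> rat \<Rightarrow> int \<Rightarrow> bool" where
  "padic_val_ge p x k \<longleftrightarrow> x = 0 \<or> k \<le> padic_val p x"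

lemma padic_val_ge_mono: "padic_val_ge p x k \<Longrightarrow> j \<le> k \<Longrightarrow> padic_val_ge p x j"
  by (auto simp: padic_val_ge_def)

lemma padic_val_ge_of_int: "padic_val_ge p (of_int a) 0"
  by (simp add: padic_val_ge_def padic_val_of_int)

lemma padic_val_ge_uminus: "padic_val_ge p (- x) k \<longleftrightarrow> padic_val_ge p x k"
  by (auto simp: padic_val_ge_def padic_val_uminus)

lemma padic_val_ge_add:
  assumes "prime p" "padic_val_ge p x k" "padic_val_ge p y k"
  shows "padic_val_ge p (x + y) k"
proof (cases "x = 0 \<or> y = 0 \<or> x + y = 0")
  case False
  thus ?thesis using padic_val_add[OF assms(1)] assms(2,3) by (force simp: padic_val_ge_def)
qed (use assms in \<open>auto simp: padic_val_ge_def\<close>)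

lemma padic_val_ge_diff:
  assumes "prime p" "padic_val_ge p x k" "padic_val_ge p y k"
  shows "padic_val_ge p (x - y) k"
  using padic_val_ge_add[OF assms(1,2), of "- y"] assms(3) by (simp add: padic_val_ge_uminus)

lemma padic_val_ge_mult:
  assumes "prime p" "padic_val_ge p x k" "padic_val_ge p y j"
  shows "padic_val_ge p (x * y) (k + j)"
proof (cases "x = 0 \<or> y = 0")
  case False
  thus ?thesis using assms padic_val_mult[OF assms(1), of x y] by (auto simp: padic_val_ge_def)
qed (auto simp: padic_val_ge_def)

lemma padic_val_ge_power:
  assumes "prime p" "padic_val_ge p x k" "k \<ge> 0"
  shows "padic_val_ge p (x ^ n) (int n * k)"
proof (cases "x = 0")
  case False
  thus ?thesis using assms padic_val_power[OF assms(1) False, of n]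
    by (auto simp: padic_val_ge_def intro!: mult_left_mono)
qed (cases n, auto simp: padic_val_ge_def)

lemma padic_val_ge_0_of_square:
  assumes "prime p" "padic_val_ge p (w ^ 2) 0"
  shows "padic_val_ge p w 0"
proof (cases "w = 0")
  case False
  thus ?thesis using assms padic_val_power[OF assms(1) False, of 2] by (auto simp: padic_val_ge_def)
qed (simp add: padic_val_ge_def)

lemma padic_val_add_eq_left:
  assumes p: "prime p" and x: "x \<noteq> 0" and y: "padic_val_ge p y (padic_val p x + 1)"
  shows "x + y \<noteq> 0 \<and> padic_val p (x + y) = padic_val p x"
proof -
  have "\<not> padic_val_ge p (x + y) (padic_val p x + 1)"
  proof
    assume "padic_val_ge p (x + y) (padic_val p x + 1)"
    hence "padic_val_ge p (x + y - y) (padic_val p x + 1)" using padic_val_ge_diff[OF p _ y] by blast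
    thus False using x by (simp add: padic_val_ge_def)
  qed
  hence ne: "x + y \<noteq> 0" and le: "padic_val p (x + y) \<le> padic_val p x"
    by (auto simp: padic_val_ge_def)
  have "padic_val p x \<le> padic_val p (x + y)"
  proof (cases "y = 0")
    case False
    thus ?thesis using padic_val_add[OF p x False ne] y by (auto simp: padic_val_ge_def)
  qed simp
  thus ?thesis using ne le by simp
qed

section \<open>Congruences forced by a \<open>\<rat>_p\<close>-point\<close>

lemma has_Qp_point_approx:
  assumes p: "prime p" and h: "has_Qp_point p a b"
  shows "\<exists>z w. padic_val_ge p (w ^ 2 - of_int a - of_int b * z ^ 4) k"
proof -
  obtain Z W where t: "padic_tendsto_zero p (\<lambda>n. (W n) ^ 2 - of_int a - of_int b * (Z n) ^ 4)"
    using h unfolding has_Qp_point_def by blast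
  have p1: "real_of_int p > 1" using p prime_gt_1_int by simp
  hence "real_of_int p powr (- real_of_int k) > 0" by simp
  then obtain N where "padic_abs p ((W N) ^ 2 - of_int a - of_int b * (Z N) ^ 4)
      < real_of_int p powr (- real_of_int k)"
    using t unfolding padic_tendsto_zero_def by blast
  hence "padic_val_ge p ((W N) ^ 2 - of_int a - of_int b * (Z N) ^ 4) k"
    using p1 by (auto simp: padic_abs_def padic_val_ge_def split: if_splits)
  thus ?thesis by blast
qed

text \<open>A \<open>p\<close>-integral rational square root of \<open>c\<close> modulo \<open>p^k\<close> yields an integer one, since
  its denominator is invertible modulo \<open>p^k\<close>.\<close>

lemma square_cong_of_rat_square:
  assumes p: "prime p" and q: "padic_val_ge p q 0" and h: "padic_val_ge p (q ^ 2 - of_int c) (int k)"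
  shows "\<exists>m. [m ^ 2 = c] (mod p ^ k)"
proof -
  obtain a b where x: "q = of_int a / of_int b" "b > 0" "coprime a b" using rat_fraction by blast
  have pe: "prime_elem p" using p by (rule prime_imp_prime_elem)
  have nb: "\<not> p dvd b"
  proof
    assume pb: "p dvd b"
    hence "\<not> p dvd a" using x(3) p by (metis coprime_common_divisor not_prime_unit)
    hence a0: "multiplicity p a = 0" and an: "a \<noteq> 0" by (auto simp: not_dvd_imp_multiplicity_0)
    have "multiplicity p b > 0" using pb x(2) multiplicity_gt_zero_iff[of b p] not_prime_unit p by auto
    moreover have "padic_val p q = int (multiplicity p a) - int (multiplicity p b)"
      unfolding x(1) using padic_val_fraction[OF p an] x by simp
    ultimately show False using q a0 an x by (simp add: padic_val_ge_def)
  qed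
  have e: "q ^ 2 - of_int c = of_int (a ^ 2 - c * b ^ 2) / of_int (b ^ 2)"
    using x by (simp add: power_divide diff_divide_distrib)
  have "p ^ k dvd a ^ 2 - c * b ^ 2"
  proof (cases "a ^ 2 - c * b ^ 2 = 0")
    case False
    have "multiplicity p (b ^ 2) = 0"
      using nb p by (simp add: prime_dvd_power_iff not_dvd_imp_multiplicity_0)
    hence "padic_val p (q ^ 2 - of_int c) = int (multiplicity p (a ^ 2 - c * b ^ 2))"
      unfolding e using padic_val_fraction[OF p False, of "b ^ 2"] x(2) by simp
    moreover have "q ^ 2 - of_int c \<noteq> 0"
      unfolding e using False x(2) by (simp only: divide_eq_0_iff of_int_eq_0_iff) simp
    ultimately show ?thesis using h by (simp add: padic_val_ge_def multiplicity_dvd')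
  qed simp
  hence c1: "[a ^ 2 = c * b ^ 2] (mod p ^ k)" by (simp add: cong_iff_dvd_diff)
  have "coprime b (p ^ k)" using nb p by (metis coprime_commute coprime_power_right_iff prime_imp_coprime)
  then obtain b' where b': "[b * b' = 1] (mod p ^ k)" using cong_solve_coprime_int by blast
  have "[(a * b') ^ 2 = c * (b * b') ^ 2] (mod p ^ k)"
    using cong_mult[OF c1 cong_refl[of "b' ^ 2"]] by (simp add: power_mult_distrib ac_simps)
  also have "[c * (b * b') ^ 2 = c * 1 ^ 2] (mod p ^ k)"
    using b' by (intro cong_mult cong_pow cong_refl)
  finally show ?thesis by auto
qed

text \<open>If \<open>v_p(b) \<in> {1, 3}\<close>, a non-integral \<open>Z\<close> would give \<open>W^2\<close> the odd valuation
  \<open>v_p(b) + 4 v_p(Z) < 0\<close>, so \<open>Z\<close> is integral and \<open>W^2 \<equiv> a\<close> modulo \<open>p^{v_p(b)}\<close>.\<close>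

lemma has_Qp_point_imp_square_cong_const:
  assumes p: "prime p" and j: "multiplicity p b \<in> {1, 3}" and h: "has_Qp_point p a b"
  shows "\<exists>m. [m ^ 2 = a] (mod p ^ multiplicity p b)"
proof -
  define j where "j = multiplicity p b"
  obtain z w where F: "padic_val_ge p (w ^ 2 - of_int a - of_int b * z ^ 4) (int j)"
    using has_Qp_point_approx[OF p h] by blast
  have vb: "padic_val p (of_int b) = int j" unfolding j_def by (simp add: padic_val_of_int)
  have b0: "b \<noteq> 0" using j by auto
  show ?thesis
  proof (cases "padic_val_ge p z 0")
    case True
    have "padic_val_ge p (of_int b) (int j)" using vb by (simp add: padic_val_ge_def)
    from padic_val_ge_mult[OF p this padic_val_ge_power[OF p True, of 4]]
    have "padic_val_ge p (of_int b * z ^ 4) (int j)" by simp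
    hence wa: "padic_val_ge p (w ^ 2 - of_int a) (int j)"
      using padic_val_ge_add[OF p F] by fastforce
    hence "padic_val_ge p (w ^ 2 - of_int a + of_int a) 0"
      using padic_val_ge_add[OF p padic_val_ge_mono[OF wa] padic_val_ge_of_int[of p a]] by simp
    hence "padic_val_ge p w 0" using padic_val_ge_0_of_square[OF p] by simp
    thus ?thesis using square_cong_of_rat_square[OF p _ wa] unfolding j_def by blast
  next
    case False
    hence z0: "z \<noteq> 0" and vz: "padic_val p z < 0" by (auto simp: padic_val_ge_def)
    define X where "X = of_int b * z ^ 4"
    have X0: "X \<noteq> 0" and vX: "padic_val p X = int j + 4 * padic_val p z"
      unfolding X_def using padic_val_mult[OF p, of "of_int b" "z ^ 4"] padic_val_power[OF p z0, of 4]
        vb z0 b0 by auto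
    have "padic_val_ge p (of_int a + (w ^ 2 - of_int a - X)) 0"
      using padic_val_ge_add[OF p padic_val_ge_of_int[of p a] padic_val_ge_mono[OF F[folded X_def]]] by simp
    hence "padic_val_ge p (of_int a + (w ^ 2 - of_int a - X)) (padic_val p X + 1)"
      using vX vz j unfolding j_def by (auto intro: padic_val_ge_mono)
    from padic_val_add_eq_left[OF p X0 this]
    have "w ^ 2 \<noteq> 0" "padic_val p (w ^ 2) = int j + 4 * padic_val p z" using vX by auto
    hence "2 * padic_val p w = int j + 4 * padic_val p z" using padic_val_power[OF p, of w 2] by auto
    moreover have "j = 1 \<or> j = 3" using j unfolding j_def by auto
    ultimately have False by presburger
    thus ?thesis ..
  qed
qed

text \<open>If \<open>v_p(a) = 1\<close>, then \<open>p \<nmid> Z\<close> (otherwise \<open>v_p(W^2) = 1\<close>), and \<open>(W / Z^2)^2 \<equiv> b\<close>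
  modulo \<open>p\<close>.\<close>

lemma has_Qp_point_imp_square_cong_coeff:
  assumes p: "prime p" and a: "multiplicity p a = 1" and h: "has_Qp_point p a b"
  shows "\<exists>m. [m ^ 2 = b] (mod p)"
proof -
  obtain z w where F: "padic_val_ge p (w ^ 2 - of_int a - of_int b * z ^ 4) 2"
    using has_Qp_point_approx[OF p h] by blast
  define R where "R = w ^ 2 - of_int a - of_int b * z ^ 4"
  have va: "padic_val p (of_int a) = 1" using a by (simp add: padic_val_of_int)
  have a0: "of_int a \<noteq> (0 :: rat)" using a by auto
  show ?thesis
  proof (cases "padic_val_ge p z 1")
    case True
    from padic_val_ge_mult[OF p padic_val_ge_of_int padic_val_ge_power[OF p True, of 4]]
    have "padic_val_ge p (of_int b * z ^ 4) 4" by simp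
    hence "padic_val_ge p (of_int b * z ^ 4 + R) (padic_val p (of_int a) + 1)"
      using padic_val_ge_add[OF p _ F[folded R_def]] padic_val_ge_mono va by fastforce
    from padic_val_add_eq_left[OF p a0 this]
    have "w ^ 2 \<noteq> 0" "padic_val p (w ^ 2) = 1" using va unfolding R_def by auto
    hence "2 * padic_val p w = 1" using padic_val_power[OF p, of w 2] by auto
    thus ?thesis by presburger
  next
    case False
    hence z0: "z \<noteq> 0" and vz: "padic_val p z \<le> 0" by (auto simp: padic_val_ge_def)
    define q where "q = w / z ^ 2"
    have e: "q ^ 2 - of_int b = (of_int a + R) * inverse (z ^ 4)"
      unfolding q_def R_def using z0 by (simp add: field_simps power2_eq_square power4_eq_xxxx)
    have "padic_val p (inverse (z ^ 4)) = - 4 * padic_val p z"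
      using padic_val_inverse[OF p] padic_val_power[OF p z0, of 4] z0 by simp
    hence "padic_val_ge p (inverse (z ^ 4)) 0" using vz by (simp add: padic_val_ge_def)
    moreover have "padic_val_ge p (of_int a + R) 1"
      using padic_val_ge_add[OF p _ padic_val_ge_mono[OF F[folded R_def]]] va
      by (simp add: padic_val_ge_def)
    ultimately have qb: "padic_val_ge p (q ^ 2 - of_int b) (int 1)"
      unfolding e using padic_val_ge_mult[OF p] by fastforce
    have "padic_val_ge p (q ^ 2 - of_int b + of_int b) 0"
      using padic_val_ge_add[OF p padic_val_ge_mono[OF qb] padic_val_ge_of_int[of p b]] by simp
    hence "padic_val_ge p q 0" using padic_val_ge_0_of_square[OF p] by simp
    from square_cong_of_rat_square[OF p this qb] show ?thesis by simp
  qed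
qed

section \<open>Points from Hensel lifting\<close>

definition padic_sqrt_seq :: "int \<Rightarrow> int \<Rightarrow> (nat \<Rightarrow> int) \<Rightarrow> bool" where
  "padic_sqrt_seq p c W \<longleftrightarrow>
     (\<forall>n. p ^ n dvd (W n) ^ 2 - c) \<and> (\<forall>n. [W (Suc n) = W n] (mod p ^ n))"

lemma padic_abs_of_int_le:
  assumes p: "prime p" and d: "p ^ n dvd m"
  shows "padic_abs p (of_int m) \<le> real_of_int p powr (- real n)"
proof (cases "m = 0")
  case False
  have "n \<le> multiplicity p m" using multiplicity_geI[OF False _ d] p not_prime_unit by blast
  moreover have "real_of_int p > 1" using p prime_gt_1_int by simp
  ultimately show ?thesis using False by (simp add: padic_abs_def padic_val_of_int)
qed (simp add: padic_abs_def)

lemma prime_powr_neg_less: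
  assumes p: "prime p" and e: "(e :: real) > 0"
  obtains N where "real_of_int p powr (- real N) < e"
proof -
  have p1: "real_of_int p > 1" using p prime_gt_1_int by simp
  obtain N where "(1 / real_of_int p) ^ N < e"
    using real_arch_pow_inv[OF e, of "1 / real_of_int p"] p1 by auto
  moreover have "real_of_int p powr (- real N) = (1 / real_of_int p) ^ N"
    using p1 by (simp add: powr_minus powr_realpow power_one_over inverse_eq_divide)
  ultimately show thesis using that by metis
qed

lemma cong_pow_chain:
  fixes p :: int
  assumes step: "\<And>n. [W (Suc n) = W n] (mod p ^ n)" and "N \<le> m"
  shows "[W m = W N] (mod p ^ N)"
  using \<open>N \<le> m\<close>
proof (induction m)
  case (Suc m)
  show ?case
  proof (cases "N = Suc m")
    case False
    hence "N \<le> m" using Suc by simp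
    have "[W (Suc m) = W m] (mod p ^ N)"
      using cong_dvd_modulus[OF step[of m]] \<open>N \<le> m\<close> by (simp add: le_imp_power_dvd)
    thus ?thesis using Suc.IH[OF \<open>N \<le> m\<close>] cong_trans by blast
  qed simp
qed simp

lemma has_Qp_point_of_sqrt_seq:
  assumes p: "prime p" and W: "padic_sqrt_seq p (a + b * z ^ 4) W"
  shows "has_Qp_point p a b"
  unfolding has_Qp_point_def
proof (intro exI conjI)
  show "padic_cauchy p (\<lambda>n. of_int z)"
    unfolding padic_cauchy_def by (simp add: padic_abs_def)
  show "padic_cauchy p (\<lambda>n. of_int (W n))"
    unfolding padic_cauchy_def
  proof (intro allI impI)
    fix e :: real assume "e > 0"
    then obtain N where N: "real_of_int p powr (- real N) < e" using prime_powr_neg_less[OF p] by blast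
    have "padic_abs p (of_int (W m) - of_int (W n)) < e" if "N \<le> m" "N \<le> n" for m n
    proof -
      have "[W m = W n] (mod p ^ N)"
        using W cong_pow_chain[of W p N] that unfolding padic_sqrt_seq_def by (meson cong_sym cong_trans)
      hence "p ^ N dvd W m - W n" by (simp add: cong_iff_dvd_diff)
      from padic_abs_of_int_le[OF p this] N show ?thesis by simp
    qed
    thus "\<exists>N. \<forall>m\<ge>N. \<forall>n\<ge>N. padic_abs p (of_int (W m) - of_int (W n)) < e" by blast
  qed
  show "padic_tendsto_zero p (\<lambda>n. (of_int (W n)) ^ 2 - of_int a - of_int b * (of_int z) ^ 4)"
    unfolding padic_tendsto_zero_def
  proof (intro allI impI)
    fix e :: real assume "e > 0"
    then obtain N where N: "real_of_int p powr (- real N) < e" using prime_powr_neg_less[OF p] by blast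
    have "padic_abs p ((of_int (W n)) ^ 2 - of_int a - of_int b * (of_int z) ^ 4) < e" if "N \<le> n" for n
    proof -
      have "p ^ N dvd (W n) ^ 2 - (a + b * z ^ 4)"
        using W that unfolding padic_sqrt_seq_def by (meson dvd_trans le_imp_power_dvd)
      from padic_abs_of_int_le[OF p this] N show ?thesis by (simp add: algebra_simps)
    qed
    thus "\<exists>N. \<forall>n\<ge>N. padic_abs p ((of_int (W n)) ^ 2 - of_int a - of_int b * (of_int z) ^ 4) < e"
      by blast
  qed
qed

text \<open>Newton step: the correction \<open>k p^{n+1}\<close> with \<open>2 x k \<equiv> -g (mod p)\<close>, where
  \<open>x^2 - c = p^{n+1} g\<close>, kills the next digit of \<open>x^2 - c\<close>.\<close>

lemma hensel_step_odd:
  fixes p x c :: int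
  assumes p: "prime p" "odd p" and x: "[x ^ 2 = c] (mod p ^ Suc n)" "\<not> p dvd x"
  shows "\<exists>y. [y = x] (mod p ^ Suc n) \<and> [y ^ 2 = c] (mod p ^ Suc (Suc n)) \<and> \<not> p dvd y"
proof -
  obtain g where g: "x ^ 2 - c = p ^ Suc n * g" using x(1) by (metis cong_iff_dvd_diff dvdE)
  have "\<not> p dvd 2" using p primes_dvd_imp_eq[of p 2] by auto
  hence "\<not> p dvd 2 * x" using x(2) p(1) prime_dvd_mult_iff by blast
  hence "coprime (2 * x) p" using p(1) prime_imp_coprime coprime_commute by blast
  then obtain i where i: "[2 * x * i = 1] (mod p)" using cong_solve_coprime_int by blast
  define k where "k = - g * i"
  define y where "y = x + k * p ^ Suc n"
  have "[g + 2 * x * k = g + - g * (2 * x * i)] (mod p)" unfolding k_def by (simp add: algebra_simps)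
  also have "[g + - g * (2 * x * i) = g + - g * 1] (mod p)" using i by (intro cong_add cong_mult) auto
  finally have "p dvd g + 2 * x * k + k ^ 2 * p ^ Suc n" by (simp add: cong_0_iff)
  then obtain h where h: "g + 2 * x * k + k ^ 2 * p ^ Suc n = p * h" by (elim dvdE)
  have "y ^ 2 - c = p ^ Suc n * (g + 2 * x * k + k ^ 2 * p ^ Suc n)"
    unfolding y_def using g by (simp add: algebra_simps power2_eq_square)
  also have "\<dots> = p ^ Suc (Suc n) * h" using h by simp
  finally have "[y ^ 2 = c] (mod p ^ Suc (Suc n))" unfolding cong_iff_dvd_diff by simp
  moreover have "[y = x] (mod p ^ Suc n)" unfolding y_def cong_iff_dvd_diff by simp
  moreover have "\<not> p dvd y" using x(2) unfolding y_def by (simp add: dvd_add_left_iff)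
  ultimately show ?thesis by blast
qed

lemma Legendre_eq_1_iff: "Legendre a p = 1 \<longleftrightarrow> \<not> p dvd a \<and> (\<exists>y. [y ^ 2 = a] (mod p))"
  by (simp add: Legendre_def QuadRes_def cong_0_iff)

lemma hensel_sqrt_seq_odd:
  fixes p c :: int
  assumes p: "prime p" "odd p" and c: "Legendre c p = 1"
  shows "\<exists>W. padic_sqrt_seq p c W"
proof -
  obtain x where x: "[x ^ 2 = c] (mod p)" "\<not> p dvd c" using c Legendre_eq_1_iff by blast
  have "\<not> p dvd x"
  proof
    assume "p dvd x"
    hence "p dvd x ^ 2" by (simp add: power2_eq_square)
    thus False using cong_dvd_iff[OF x(1)] x(2) by simp
  qed
  have "\<exists>W. \<forall>n. ([(W n) ^ 2 = c] (mod p ^ Suc n) \<and> \<not> p dvd W n)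
                \<and> [W (Suc n) = W n] (mod p ^ Suc n)"
  proof (rule dependent_nat_choice)
    show "\<exists>y. [y ^ 2 = c] (mod p ^ Suc 0) \<and> \<not> p dvd y" using x \<open>\<not> p dvd x\<close> by auto
    fix y n assume "[y ^ 2 = c] (mod p ^ Suc n) \<and> \<not> p dvd y"
    thus "\<exists>z. ([z ^ 2 = c] (mod p ^ Suc (Suc n)) \<and> \<not> p dvd z) \<and> [z = y] (mod p ^ Suc n)"
      using hensel_step_odd[OF p] by blast
  qed
  then obtain W where W: "\<And>n. [(W n) ^ 2 = c] (mod p ^ Suc n)" "\<And>n. [W (Suc n) = W n] (mod p ^ Suc n)"
    by blast
  have "\<And>n. p ^ n dvd p ^ Suc n" by simp
  hence "padic_sqrt_seq p c W"
    unfolding padic_sqrt_seq_def using W cong_dvd_modulus dvd_trans cong_iff_dvd_diff by meson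
  thus ?thesis by blast
qed

text \<open>For \<open>p = 2\<close> the derivative \<open>2x\<close> is not a unit; instead, a solution modulo \<open>2^{n+3}\<close>
  is corrected by \<open>k 2^{n+2}\<close> and then only determined modulo \<open>2^{n+2}\<close>.\<close>

lemma hensel_step_2:
  fixes x c :: int
  assumes x: "[x ^ 2 = c] (mod 2 ^ (n + 3))" "odd x"
  shows "\<exists>y. [y = x] (mod 2 ^ (n + 2)) \<and> [y ^ 2 = c] (mod 2 ^ (n + 4)) \<and> odd y"
proof -
  obtain g where g: "x ^ 2 - c = 2 ^ (n + 3) * g" using x(1) by (metis cong_iff_dvd_diff dvdE)
  define k where "k = g mod 2"
  define y where "y = x + k * 2 ^ (n + 2)"
  have "even (g + k * x)" unfolding k_def using x(2) by (cases "even g") (auto simp: mod_2_eq_odd)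
  hence "even (g + k * x + k ^ 2 * 2 ^ (n + 1))" by simp
  then obtain h where h: "g + k * x + k ^ 2 * 2 ^ (n + 1) = 2 * h" by blast
  have "y ^ 2 - c = 2 ^ (n + 3) * (g + k * x + k ^ 2 * 2 ^ (n + 1))"
    unfolding y_def using g by (simp add: algebra_simps power2_eq_square power_add)
  also have "\<dots> = 2 ^ (n + 4) * h" unfolding h by (simp add: power_add)
  finally have "[y ^ 2 = c] (mod 2 ^ (n + 4))" by (simp add: cong_iff_dvd_diff)
  moreover have "[y = x] (mod 2 ^ (n + 2))" unfolding y_def by (simp add: cong_iff_dvd_diff)
  moreover have "odd y" using x(2) unfolding y_def by simp
  ultimately show ?thesis by blast
qed

lemma hensel_sqrt_seq_2:
  assumes "[c = 1] (mod 8)"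
  shows "\<exists>W. padic_sqrt_seq 2 c W"
proof -
  have "\<exists>W. \<forall>n. ([(W n) ^ 2 = c] (mod 2 ^ (n + 3)) \<and> odd (W n))
                \<and> [W (Suc n) = W n] (mod 2 ^ (n + 2))"
  proof (rule dependent_nat_choice)
    show "\<exists>x. [x ^ 2 = c] (mod 2 ^ (0 + 3)) \<and> odd x"
      using assms cong_sym by (intro exI[of _ 1]) auto
    fix x n assume "[x ^ 2 = c] (mod 2 ^ (n + 3)) \<and> odd x"
    moreover have "Suc n + 3 = n + 4" by simp
    ultimately show "\<exists>y. ([y ^ 2 = c] (mod 2 ^ (Suc n + 3)) \<and> odd y) \<and> [y = x] (mod 2 ^ (n + 2))"
      using hensel_step_2[of x c n] by metis
  qed
  then obtain W where W: "\<And>n. [(W n) ^ 2 = c] (mod 2 ^ (n + 3))" "\<And>n. [W (Suc n) = W n] (mod 2 ^ (n + 2))"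
    by blast
  have "\<And>n k. (2 :: int) ^ n dvd 2 ^ (n + k)" by (simp add: le_imp_power_dvd)
  hence "padic_sqrt_seq 2 c W"
    unfolding padic_sqrt_seq_def using W cong_dvd_modulus dvd_trans cong_iff_dvd_diff by meson
  thus ?thesis by blast
qed

lemma Legendre_cong:
  assumes "[a = b] (mod p)"
  shows "Legendre a p = Legendre b p"
proof -
  have "\<And>c. [c = a] (mod p) \<longleftrightarrow> [c = b] (mod p)"
    using assms cong_sym cong_trans by blast
  thus ?thesis unfolding Legendre_def QuadRes_def by (simp add: cong_sym_eq[of _ 0])
qed

lemma Legendre_mult_square:
  assumes p: "prime p" and k: "\<not> p dvd k"
  shows "Legendre (k ^ 2 * a) p = Legendre a p"
proof -
  have "[k ^ 2 * a = 0] (mod p) \<longleftrightarrow> [a = 0] (mod p)"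
    using p k by (simp add: cong_0_iff prime_dvd_mult_iff prime_dvd_power_iff)
  moreover have "QuadRes p (k ^ 2 * a) \<longleftrightarrow> QuadRes p a"
  proof
    assume "QuadRes p (k ^ 2 * a)"
    then obtain y where y: "[y ^ 2 = k ^ 2 * a] (mod p)" by (auto simp: QuadRes_def)
    have "coprime k p" using p k by (metis coprime_commute prime_imp_coprime)
    then obtain i where i: "[k * i = 1] (mod p)" using cong_solve_coprime_int by blast
    have "[(i * y) ^ 2 = i ^ 2 * (k ^ 2 * a)] (mod p)"
      using cong_mult[OF cong_refl y] by (simp add: power_mult_distrib)
    also have "i ^ 2 * (k ^ 2 * a) = (k * i) ^ 2 * a" by (simp add: power_mult_distrib)
    also have "[(k * i) ^ 2 * a = 1 ^ 2 * a] (mod p)" using i by (intro cong_mult cong_pow cong_refl)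
    finally show "QuadRes p a" by (auto simp: QuadRes_def)
  next
    assume "QuadRes p a"
    then obtain y where "[y ^ 2 = a] (mod p)" by (auto simp: QuadRes_def)
    hence "[(k * y) ^ 2 = k ^ 2 * a] (mod p)" by (simp add: power_mult_distrib cong_scalar_left)
    thus "QuadRes p (k ^ 2 * a)" by (auto simp: QuadRes_def)
  qed
  ultimately show ?thesis by (simp add: Legendre_def)
qed

lemma odd_square_cong_1_mod_8:
  assumes "odd (m :: int)"
  shows "[m ^ 2 = 1] (mod 8)"
proof -
  obtain j where j: "m = 2 * j + 1" using assms by (metis oddE)
  obtain h where h: "j * (j + 1) = 2 * h" by (metis even_mult_iff even_plus_one_iff evenE)
  have "m ^ 2 - 1 = 8 * h" using h unfolding j by (simp add: algebra_simps power2_eq_square)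
  thus ?thesis unfolding cong_iff_dvd_diff by simp
qed

lemma has_Qp_point_2_iff:
  assumes a: "odd a" and b: "multiplicity 2 b = 3"
  shows "has_Qp_point 2 a b \<longleftrightarrow> [a = 1] (mod 8)"
proof
  assume "has_Qp_point 2 a b"
  then obtain m where m: "[m ^ 2 = a] (mod 8)"
    using has_Qp_point_imp_square_cong_const[of 2 b a] b by auto
  have "[m ^ 2 = a] (mod 2)" by (rule cong_dvd_modulus[OF m]) simp
  hence "odd (m ^ 2)" using a by (simp only: cong_def odd_iff_mod_2_eq_one)
  hence "[m ^ 2 = 1] (mod 8)" using odd_square_cong_1_mod_8 by simp
  thus "[a = 1] (mod 8)" using m cong_sym cong_trans by blast
next
  assume "[a = 1] (mod 8)"
  then obtain W where "padic_sqrt_seq 2 a W" using hensel_sqrt_seq_2 by blast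
  thus "has_Qp_point 2 a b" using has_Qp_point_of_sqrt_seq[of 2 a b 0] by simp
qed

lemma has_Qp_point_iff_Legendre_const:
  assumes p: "prime p" "odd p" and b: "multiplicity p b = 1" and a: "\<not> p dvd a"
  shows "has_Qp_point p a b \<longleftrightarrow> Legendre a p = 1"
proof
  assume "has_Qp_point p a b"
  then obtain m where "[m ^ 2 = a] (mod p)"
    using has_Qp_point_imp_square_cong_const[OF p(1)] b by fastforce
  thus "Legendre a p = 1" using a Legendre_eq_1_iff by blast
next
  assume "Legendre a p = 1"
  then obtain W where "padic_sqrt_seq p a W" using hensel_sqrt_seq_odd[OF p] by blast
  thus "has_Qp_point p a b" using has_Qp_point_of_sqrt_seq[OF p(1), of a b 0] by simp
qed

lemma has_Qp_point_iff_Legendre_coeff: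
  assumes p: "prime p" "odd p" and a: "multiplicity p a = 1" and b: "\<not> p dvd b"
  shows "has_Qp_point p a b \<longleftrightarrow> Legendre b p = 1"
proof
  assume "has_Qp_point p a b"
  then obtain m where "[m ^ 2 = b] (mod p)" using has_Qp_point_imp_square_cong_coeff[OF p(1) a] by blast
  thus "Legendre b p = 1" using b Legendre_eq_1_iff by blast
next
  assume "Legendre b p = 1"
  moreover have "p dvd a" using multiplicity_dvd'[of 1 p a] a by simp
  hence "[a + b * 1 ^ 4 = b] (mod p)" by (simp add: cong_iff_dvd_diff)
  ultimately have "Legendre (a + b * 1 ^ 4) p = 1" by (simp only: Legendre_cong)
  then obtain W where "padic_sqrt_seq p (a + b * 1 ^ 4) W" using hensel_sqrt_seq_odd[OF p] by blast
  thus "has_Qp_point p a b" using has_Qp_point_of_sqrt_seq[OF p(1)] by blast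
qed

section \<open>The curves \<open>W^2 = d + 8 e Z^4\<close> with \<open>2 d e\<close> squarefree\<close>

lemma squarefree_mult_prime_dvd_left:
  fixes a b t :: int
  assumes "squarefree (a * b)" "prime t" "t dvd a"
  shows "\<not> t dvd b"
proof
  assume "t dvd b"
  hence "t ^ 2 dvd a * b" using assms(3) by (simp add: power2_eq_square mult_dvd_mono)
  thus False using assms(1,2) by (auto simp: squarefree_def)
qed

lemma squarefree_prime_dvd_multiplicity:
  fixes n t :: int
  assumes "squarefree n" "prime t" "t dvd n"
  shows "multiplicity t n = 1"
proof -
  have "n \<noteq> 0" using assms(1) by auto
  thus ?thesis using assms squarefree_factorial_semiring'[OF \<open>n \<noteq> 0\<close>] in_prime_factors_iff by metis
qed

lemma odd_prime_if_not_dvd_2: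
  fixes t :: int
  assumes "prime t" "\<not> t dvd 2"
  shows "odd t"
  using assms prime_odd_int[of t] prime_ge_2_int[of t] by fastforce

lemma has_Qp_point_at_2_iff:
  fixes d e :: int
  assumes sf: "squarefree (2 * d * e)"
  shows "has_Qp_point 2 d (8 * e) \<longleftrightarrow> [d = 1] (mod 8)"
proof (rule has_Qp_point_2_iff)
  have "\<not> 2 dvd d * e" using squarefree_mult_prime_dvd_left[of 2 "d * e" 2] sf by (simp add: mult.assoc)
  moreover have "multiplicity (2 :: int) 8 = 3" using multiplicity_prime_power[of "2 :: int" 3] by simp
  ultimately show "odd d" and "multiplicity 2 (8 * e) = 3"
    using multiplicity_prime_elem_times_other[of 2 e 8] by (simp_all add: mult.commute)
qed

lemma has_Qp_point_at_prime_dvd_coeff_iff: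
  fixes d e t :: int
  assumes sf: "squarefree (2 * d * e)" and t: "prime t" "t dvd e"
  shows "has_Qp_point t d (8 * e) \<longleftrightarrow> Legendre d t = 1"
proof (rule has_Qp_point_iff_Legendre_const[OF t(1)])
  have "\<not> t dvd 2 * d" using squarefree_mult_prime_dvd_left[of e "2 * d" t] sf t by (simp add: ac_simps)
  hence t2: "\<not> t dvd 2" and "\<not> t dvd d" using t(1) by (auto simp: prime_dvd_mult_iff)
  thus "\<not> t dvd d" and "odd t" using odd_prime_if_not_dvd_2[OF t(1)] by blast+
  have "multiplicity t e = 1"
    using squarefree_prime_dvd_multiplicity[OF squarefree_multD(2)[of "2 * d" e] t] sf by simp
  moreover have "\<not> t dvd 2 ^ 3" using t2 prime_dvd_power_iff[OF t(1), of 3 2] by simp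
  ultimately show "multiplicity t (8 * e) = 1"
    using multiplicity_prime_elem_times_other[OF prime_imp_prime_elem[OF t(1)], of "2 ^ 3" e] by simp
qed

lemma has_Qp_point_at_prime_dvd_const_iff:
  fixes d e l :: int
  assumes sf: "squarefree (2 * d * e)" and l: "prime l" "l dvd d"
  shows "has_Qp_point l d (8 * e) \<longleftrightarrow> Legendre (2 * e) l = 1"
proof -
  have "\<not> l dvd 2 * e" using squarefree_mult_prime_dvd_left[of d "2 * e" l] sf l by (simp add: ac_simps)
  hence l2: "\<not> l dvd 2" and l2e: "\<not> l dvd 2 * e" using l(1) by (auto simp: prime_dvd_mult_iff)
  hence ol: "odd l" using odd_prime_if_not_dvd_2[OF l(1)] by blast
  have "multiplicity l d = 1"
    using squarefree_prime_dvd_multiplicity[OF squarefree_multD(1)[of d "2 * e"] l] sf by (simp add: ac_simps)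
  moreover have "\<not> l dvd 2 ^ 2" using l2 prime_dvd_power_iff[OF l(1), of 2 2] by simp
  hence "\<not> l dvd 2 ^ 2 * (2 * e)" using l2e prime_dvd_mult_iff[OF l(1)] by blast
  ultimately have "has_Qp_point l d (2 ^ 2 * (2 * e)) \<longleftrightarrow> Legendre (2 ^ 2 * (2 * e)) l = 1"
    by (rule has_Qp_point_iff_Legendre_coeff[OF l(1) ol])
  thus ?thesis using Legendre_mult_square[OF l(1) l2, of "2 * e"] by simp
qed

theorem lemma2p1:
  fixes p q r d D :: int
  assumes "prime p" "prime q" "odd p" "odd q" "p \<noteq> q"
    and "D = p * q"
    and "r > 0"
    and "squarefree (2 * r * D)"
    and "d dvd r * D"
  shows "(has_Qp_point 2 d (8 * (r * D div d)) \<longleftrightarrow> [d = 1] (mod 8))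
    \<and> (\<forall>t::int. prime t \<and> t dvd (r * D div d) \<longrightarrow>
          (has_Qp_point t d (8 * (r * D div d)) \<longleftrightarrow> Legendre d t = 1))
    \<and> (\<forall>l::int. prime l \<and> l dvd d \<longrightarrow>
          (has_Qp_point l d (8 * (r * D div d)) \<longleftrightarrow> Legendre (2 * (r * D div d)) l = 1))"
proof -
  define e where "e = r * D div d"
  have "d * e = r * D" unfolding e_def using assms(9) by simp
  hence sf: "squarefree (2 * d * e)" using assms(8) by (simp add: mult.assoc)
  show ?thesis
    unfolding e_def[symmetric]
    using has_Qp_point_at_2_iff[OF sf] has_Qp_point_at_prime_dvd_coeff_iff[OF sf]
      has_Qp_point_at_prime_dvd_const_iff[OF sf]
    by blast
qed

end
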